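(* Let $-1 \le a < b \le 1$, $\alpha=\arccos a$, $\beta=\arccos b$. Define $g:[0,\pi]\to\mathbb{R}$ by $g(\theta)=1$ for $\theta\in(\beta,\alpha)$, $g(\theta)=\tfrac12$ for $\theta\in\{\alpha,\beta\}$, $g(\theta)=0$ for $\theta\in[0,\pi]\setminus[\beta,\alpha]$, and let $c_0=\frac{1}{\pi}(\alpha-\beta)$, $c_j=\frac{2}{\pi}\cdot\frac{\sin(j\alpha)-\sin(j\beta)}{j}$ for $j\ge1$. For $m>0$ and integers $k\ge1$, define the exponent-$m$ Lanczos damping factors $d^m_{0,k}=1$ and \[ d^m_{j,k}=\left(\frac{\sin\left(\frac{j\pi}{k+1}\right)}{\frac{j\pi}{k+1}}\right)^m,\quad j\ge 1, \] and for an integer $k'$ with $1\le k'\le k$ define $g^m_{k',k}(\theta)=\sum_{j=0}^{k'} c_j\, d^m_{j,k}\cos(j\theta)$. Then for every $m>0$, every integer $k\ge1$, every integer $1\le k'\le k$, and every $\theta\in[0,\pi]$, \[ |g(\theta)-g^m_{k',k}(\theta)|\le \frac{d^m_{k',k}\,J(\theta)}{\pi(k'+1)}+\frac{m\,\mathcal{C}_m\,J(\theta)}{k+1}+\frac{m\pi(\pi-\theta)}{3(k+1)^2}, \] where \[ \mathcal{C}_m=\int_0^{\pi}\frac{(\sin u)^{m-1}(\sin u-u\cos u)}{u^{m+2}}\,du, \] and \[ J(\theta)=\begin{cases} \frac{1}{|\sin\frac{\theta+\alpha}{2}|}+\frac{1}{|\sin\frac{\theta-\alpha}{2}|}+\frac{1}{|\sin\frac{\theta+\beta}{2}|}+\frac{1}{|\sin\frac{\theta-\beta}{2}|},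 & \theta\ne\alpha,\beta,\\[4pt] \frac{1}{|\sin\alpha|}+\frac{1}{|\sin\frac{\alpha+\beta}{2}|}+\frac{1}{|\sin\frac{\alpha-\beta}{2}|}, & \theta=\alpha,\\[4pt] \frac{1}{|\sin\beta|}+\frac{1}{|\sin\frac{\alpha+\beta}{2}|}+\frac{1}{|\sin\frac{\alpha-\beta}{2}|}, & \theta=\beta. \end{cases} \]
   Context: Any term of the form $1/0$ in $J(\theta)$ is interpreted as $+\infty$, in which case the bound holds trivially. The function $g^m_{k',k}$ is a damped partial Fourier cosine sum of $g$, where the damping factors are computed for the maximal degree $k$ but the sum is truncated at degree $k'$. *)

theory Defs
  imports "HOL-Analysis.Analysis" "HOL-Library.Extended_Real"
begin

definition gfun :: "real \<Rightarrow> real \<Rightarrow> real \<Rightarrow> real" where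
  "gfun a b \<theta> = (let \<alpha> = arccos a; \<beta> = arccos b in
     if \<beta> < \<theta> \<and> \<theta> < \<alpha> then 1
     else if \<theta> = \<alpha> \<or> \<theta> = \<beta> then 1/2
     else 0)"

definition coef :: "real \<Rightarrow> real \<Rightarrow> nat \<Rightarrow> real" where
  "coef a b j = (let \<alpha> = arccos a; \<beta> = arccos b in
     if j = 0 then (\<alpha> - \<beta>) / pi
     else (2 / pi) * ((sin (real j * \<alpha>) - sin (real j * \<beta>)) / real j))"

definition lanczos :: "real \<Rightarrow> nat \<Rightarrow> nat \<Rightarrow> real" where
  "lanczos m j k = (if j = 0 then 1 else
     (let x = real j * pi / (real k + 1) in (sin x / x) powr m))"

definition gmk :: "real \<Rightarrow> real \<Rightarrow> real \<Rightarrow> nat \<Rightarrow> nat \<Rightarrow> real \<Rightarrow> real" where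
  "gmk a b m k' k \<theta> = (\<Sum>j = 0..k'. coef a b j * lanczos m j k * cos (real j * \<theta>))"

definition Cm :: "real \<Rightarrow> real" where
  "Cm m = integral {0..pi}
     (\<lambda>u. (sin u) powr (m - 1) * (sin u - u * cos u) / u powr (m + 2))"

definition inv_abs :: "real \<Rightarrow> ereal" where
  "inv_abs x = (if x = 0 then \<infinity> else ereal (1 / \<bar>x\<bar>))"

definition Jfun :: "real \<Rightarrow> real \<Rightarrow> real \<Rightarrow> ereal" where
  "Jfun a b \<theta> = (let \<alpha> = arccos a; \<beta> = arccos b in
     if \<theta> = \<alpha> then inv_abs (sin \<alpha>) + inv_abs (sin ((\<alpha> + \<beta>) / 2)) + inv_abs (sin ((\<alpha> - \<beta>) / 2))
     else if \<theta> = \<beta> then inv_abs (sin \<beta>) + inv_abs (sin ((\<alpha> + \<beta>) / 2)) + inv_abs (sin ((\<alpha> - \<beta>) / 2))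
     else inv_abs (sin ((\<theta> + \<alpha>) / 2)) + inv_abs (sin ((\<theta> - \<alpha>) / 2))
        + inv_abs (sin ((\<theta> + \<beta>) / 2)) + inv_abs (sin ((\<theta> - \<beta>) / 2)))"

end

(*
  With alpha = arccos a and beta = arccos b, the identity
  2 sin(j x) cos(j theta) = sin(j (x + theta)) + sin(j (x - theta)) writes both g and its damped
  cosine sum as combinations, at the four points alpha +- theta and beta +- theta, of the sawtooth
  L(x) = (pi - x)/2 on (0, 2 pi) (extended oddly) and of damped partial sums of its sine series
  sum_j sin(j x)/j.  Abel summation against the kernel D_i = -cos((i + 1/2) x)/(2 sin(x/2)), whose
  differences are sin(i x), bounds the tail of that series from index n on by
  1/((n + 1) |sin(x/2)|).  A second summation by parts, against nonincreasing damping factors d_j,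
  turns this into the error bound
  (d_n/(n + 1) + sum_{j<n} (d_j - d_{j+1})/(j + 1)) / |sin(x/2)|.
  For the Lanczos factors d_j = sinc(j pi/(k + 1))^m, the drop d_j - d_{j+1} is the integral of
  m u psi(u) over [j pi/(k + 1), (j + 1) pi/(k + 1)], psi being the integrand of C_m; hence the
  sum is at most pi m C_m/(k + 1).
*)
theory Submission
  imports Defs "HOL-Probability.Sinc_Integral" "HOL-Real_Asymp.Real_Asymp"
begin

section \<open>The sawtooth series\<close>

lemma abel_inequality:
  fixes D w :: "nat \<Rightarrow> real"
  assumes "n \<le> N" and D_bound: "\<And>i. \<bar>D i\<bar> \<le> c"
    and w_antimono: "\<And>i. n < i \<Longrightarrow> w (Suc i) \<le> w i"
    and w_nonneg: "\<And>i. n < i \<Longrightarrow> 0 \<le> w i"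
  shows "\<bar>\<Sum>i = Suc n..N. w i * (D i - D (i - 1))\<bar> \<le> 2 * c * w (Suc n)"
proof -
  define T where
    "T N = (\<Sum>i = Suc n..N. w i * (D i - D (i - 1))) - w (Suc N) * D N + w (Suc n) * D n" for N
  have wD: "\<bar>w i * D j\<bar> \<le> w i * c" if "n < i" for i j
    using mult_left_mono[OF D_bound w_nonneg[OF that]] w_nonneg[OF that] by (simp add: abs_mult)
  have "\<bar>T N\<bar> \<le> c * (w (Suc n) - w (Suc N))"
    using \<open>n \<le> N\<close>
  proof (induction N rule: dec_induct)
    case base
    then show ?case by (simp add: T_def)
  next
    case (step N)
    have "T (Suc N) = T N + (w (Suc N) - w (Suc (Suc N))) * D (Suc N)"
      using step.hyps by (simp add: T_def algebra_simps)
    also have "\<bar>\<dots>\<bar> \<le> \<bar>T N\<bar> + \<bar>(w (Suc N) - w (Suc (Suc N))) * D (Suc N)\<bar>"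
      by (rule abs_triangle_ineq)
    also have "\<dots> \<le> c * (w (Suc n) - w (Suc N)) + (w (Suc N) - w (Suc (Suc N))) * c"
      using step.IH mult_left_mono[OF D_bound, of "w (Suc N) - w (Suc (Suc N))" "Suc N"]
        w_antimono[of "Suc N"] step.hyps
      by (intro add_mono) (simp_all add: abs_mult)
    finally show ?case
      by (simp add: algebra_simps)
  qed
  moreover have "\<bar>w (Suc N) * D N\<bar> \<le> w (Suc N) * c" "\<bar>w (Suc n) * D n\<bar> \<le> w (Suc n) * c"
    using wD \<open>n \<le> N\<close> by auto
  moreover have "(\<Sum>i = Suc n..N. w i * (D i - D (i - 1))) = T N + w (Suc N) * D N - w (Suc n) * D n"
    by (simp add: T_def)
  ultimately show ?thesis
    unfolding abs_le_iff by (simp add: algebra_simps)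
qed

definition sawtooth :: "real \<Rightarrow> real" where
  "sawtooth x = (if x = 0 then 0 else if 0 < x then (pi - x) / 2 else - (pi + x) / 2)"

definition sawtooth_sum :: "nat \<Rightarrow> real \<Rightarrow> real" where
  "sawtooth_sum n x = (\<Sum>j = 1..n. sin (real j * x) / real j)"

lemma sin_half_nonzero:
  assumes "x \<noteq> 0" "\<bar>x\<bar> < 2 * pi"
  shows "sin (x / 2) \<noteq> 0"
proof -
  have "sin (\<bar>x\<bar> / 2) > 0"
    using assms by (intro sin_gt_zero) auto
  then show ?thesis
    by (cases "x \<ge> 0") auto
qed

lemma sin_mult_eq_telescoping:
  assumes "sin (x / 2) \<noteq> 0" "1 \<le> i"
  shows "sin (real i * x) =
    cos ((real (i - 1) + 1/2) * x) / (2 * sin (x / 2)) - cos ((real i + 1/2) * x) / (2 * sin (x / 2))"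
proof -
  have "real (i - 1) + 1/2 = real i - 1/2"
    using assms(2) by (simp add: of_nat_diff)
  then have "2 * sin (real i * x) * sin (x / 2) = cos ((real (i - 1) + 1/2) * x) - cos ((real i + 1/2) * x)"
    by (simp add: algebra_simps cos_diff cos_add)
  with assms(1) show ?thesis
    by (simp add: field_simps)
qed

lemma sawtooth_sum_cauchy:
  assumes "sin (x / 2) \<noteq> 0" "n \<le> N"
  shows "\<bar>sawtooth_sum N x - sawtooth_sum n x\<bar> \<le> 1 / ((real n + 1) * \<bar>sin (x / 2)\<bar>)"
proof -
  define D where "D i = - cos ((real i + 1/2) * x) / (2 * sin (x / 2))" for i
  have "sawtooth_sum N x - sawtooth_sum n x = (\<Sum>i = Suc n..N. sin (real i * x) / real i)"
    using sum.ub_add_nat[of 1 n "\<lambda>j. sin (real j * x) / real j" "N - n"] assms(2)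
    by (simp add: sawtooth_sum_def)
  also have "\<dots> = (\<Sum>i = Suc n..N. (1 / real i) * (D i - D (i - 1)))"
    using assms(1) by (intro sum.cong refl) (simp add: D_def sin_mult_eq_telescoping diff_divide_distrib)
  also have "\<bar>\<dots>\<bar> \<le> 2 * (1 / (2 * \<bar>sin (x / 2)\<bar>)) * (1 / real (Suc n))"
  proof (rule abel_inequality[OF assms(2)])
    show "\<bar>D i\<bar> \<le> 1 / (2 * \<bar>sin (x / 2)\<bar>)" for i
      by (simp add: D_def abs_divide abs_mult divide_right_mono)
  qed (auto simp: frac_le)
  finally show ?thesis
    by (simp add: field_simps)
qed

lemma sin_half_mult_sum_cos:
  "2 * sin (t / 2) * (\<Sum>j = 1..N. cos (real j * t)) = sin ((real N + 1/2) * t) - sin (t / 2)"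
proof (induction N)
  case 0
  then show ?case by simp
next
  case (Suc N)
  have "2 * sin (t / 2) * cos (real (Suc N) * t) = sin ((real (Suc N) + 1/2) * t) - sin ((real N + 1/2) * t)"
    using sin_add[of "real (Suc N) * t" "t / 2"] sin_diff[of "real (Suc N) * t" "t / 2"]
    by (simp add: algebra_simps)
  with Suc show ?case
    by (simp add: distrib_left)
qed

lemma sawtooth_sum_has_derivative:
  "(sawtooth_sum N has_real_derivative (\<Sum>j = 1..N. cos (real j * t))) (at t)"
  unfolding sawtooth_sum_def[abs_def]
  by (rule derivative_eq_intros refl | simp)+

lemma cos_half_odd_pi: "cos ((real N + 1/2) * pi) = 0"
  by (simp add: distrib_right cos_add)

lemma sawtooth_comparison_has_derivative:
  fixes N :: nat and \<sigma> :: real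
  defines "a \<equiv> real N + 1/2"
  assumes "sin (t / 2) \<noteq> 0"
  shows "((\<lambda>t. (pi - t) / 2 - sawtooth_sum N t - (cos (a * t) + \<sigma>) / (2 * a * sin (t / 2)))
    has_real_derivative (cos (a * t) + \<sigma>) * cos (t / 2) / (4 * a * (sin (t / 2))\<^sup>2)) (at t)"
proof -
  have a: "0 < a"
    by (simp add: a_def)
  have "((\<lambda>t. (pi - t) / 2) has_real_derivative - 1/2) (at t)"
    by (auto intro!: derivative_eq_intros)
  moreover have "((\<lambda>t. (cos (a * t) + \<sigma>) / (2 * a * sin (t / 2))) has_real_derivative
      (- sin (a * t) * a * (2 * a * sin (t / 2)) - (cos (a * t) + \<sigma>) * (2 * a * (cos (t / 2) / 2)))
        / (2 * a * sin (t / 2))\<^sup>2) (at t)"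
    using assms(2) a by (auto intro!: derivative_eq_intros simp: power2_eq_square)
  ultimately have "((\<lambda>t. (pi - t) / 2 - sawtooth_sum N t - (cos (a * t) + \<sigma>) / (2 * a * sin (t / 2)))
      has_real_derivative - 1/2 - (\<Sum>j = 1..N. cos (real j * t)) -
      (- sin (a * t) * a * (2 * a * sin (t / 2)) - (cos (a * t) + \<sigma>) * (2 * a * (cos (t / 2) / 2)))
        / (2 * a * sin (t / 2))\<^sup>2) (at t)"
    by (intro DERIV_diff sawtooth_sum_has_derivative)
  moreover have "- 1/2 - (\<Sum>j = 1..N. cos (real j * t)) = - sin (a * t) / (2 * sin (t / 2))"
    using sin_half_mult_sum_cos[of t N] assms(2) by (simp add: a_def field_simps)
  moreover have "- sin (a * t) / (2 * sin (t / 2)) -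
      (- sin (a * t) * a * (2 * a * sin (t / 2)) - (cos (a * t) + \<sigma>) * (2 * a * (cos (t / 2) / 2)))
        / (2 * a * sin (t / 2))\<^sup>2 = (cos (a * t) + \<sigma>) * cos (t / 2) / (4 * a * (sin (t / 2))\<^sup>2)"
    using assms(2) a by (simp add: field_simps power2_eq_square)
  ultimately show ?thesis
    by simp
qed

(* With h(t) = (pi - t)/2 - sawtooth_sum N t and a = N + 1/2, the functions
   h(t) - (cos(a t) +- 1)/(2 a sin(t/2)) are monotone on [x, pi], as their derivatives
   (cos(a t) +- 1) cos(t/2)/(4 a sin(t/2)^2) have constant sign; comparing the values at x and
   at pi is an integration by parts of h(x) = integral of sin(a t)/(2 sin(t/2)) over [x, pi]. *)
lemma sawtooth_remainder_crude:
  assumes "0 < x" "x \<le> pi"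
  shows "\<bar>(pi - x) / 2 - sawtooth_sum N x\<bar> \<le> 2 / ((2 * real N + 1) * sin (x / 2))"
proof -
  define a where "a = real N + 1/2"
  define F where
    "F \<sigma> t = (pi - t) / 2 - sawtooth_sum N t - (cos (a * t) + \<sigma>) / (2 * a * sin (t / 2))" for \<sigma> t
  define F' where "F' \<sigma> t = (cos (a * t) + \<sigma>) * cos (t / 2) / (4 * a * (sin (t / 2))\<^sup>2)" for \<sigma> t
  have a: "a > 0"
    by (simp add: a_def)
  have sin_pos: "sin (t / 2) > 0" and cos_nonneg: "cos (t / 2) \<ge> 0" if "x \<le> t" "t \<le> pi" for t
    using that assms by (auto intro!: sin_gt_zero cos_ge_zero)
  have F_deriv: "(F \<sigma> has_real_derivative F' \<sigma> t) (at t)" if "sin (t / 2) \<noteq> 0" for \<sigma> t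
    using sawtooth_comparison_has_derivative[OF that, of N \<sigma>]
    by (simp add: F_def[abs_def] F'_def a_def)
  have "F 1 x \<le> F 1 pi"
  proof (rule DERIV_nonneg_imp_nondecreasing[OF assms(2)])
    fix t assume t: "x \<le> t" "t \<le> pi"
    have "0 \<le> cos (a * t) + 1"
      using cos_ge_minus_one[of "a * t"] by linarith
    then show "\<exists>y. (F 1 has_real_derivative y) (at t) \<and> 0 \<le> y"
      using F_deriv[of t 1] sin_pos[OF t] cos_nonneg[OF t] a
      by (intro exI[of _ "F' 1 t"] conjI) (auto simp: F'_def intro!: divide_nonneg_pos mult_nonneg_nonneg)
  qed
  moreover have "F (-1) pi \<le> F (-1) x"
  proof (rule DERIV_nonpos_imp_nonincreasing[OF assms(2)])
    fix t assume t: "x \<le> t" "t \<le> pi"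
    have "cos (a * t) - 1 \<le> 0"
      using cos_le_one[of "a * t"] by linarith
    then show "\<exists>y. (F (-1) has_real_derivative y) (at t) \<and> y \<le> 0"
      using F_deriv[of t "-1"] sin_pos[OF t] cos_nonneg[OF t] a
      by (intro exI[of _ "F' (-1) t"] conjI) (auto simp: F'_def intro!: divide_nonpos_pos mult_nonpos_nonneg)
  qed
  moreover have "F 1 pi = - 1 / (2 * a)" "F (-1) pi = 1 / (2 * a)"
    using cos_half_odd_pi[of N] by (simp_all add: F_def a_def sawtooth_sum_def)
  ultimately have "(pi - x) / 2 - sawtooth_sum N x \<le> (cos (a * x) + 1) / (2 * a * sin (x / 2))"
    and "(cos (a * x) - 1) / (2 * a * sin (x / 2)) \<le> (pi - x) / 2 - sawtooth_sum N x"
    using divide_pos_pos[of 1 "2 * a"] a unfolding F_def add_uminus_conv_diff by linarith+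
  moreover have "0 < 2 * a * sin (x / 2)"
    using sin_pos[of x] a assms by simp
  then have "(cos (a * x) + 1) / (2 * a * sin (x / 2)) \<le> 2 / (2 * a * sin (x / 2))"
    and "- 2 / (2 * a * sin (x / 2)) \<le> (cos (a * x) - 1) / (2 * a * sin (x / 2))"
    using cos_le_one[of "a * x"] cos_ge_minus_one[of "a * x"] by (intro divide_right_mono; linarith)+
  ultimately show ?thesis
    by (simp add: a_def abs_le_iff)
qed

lemma sawtooth_minus: "sawtooth (- x) = - sawtooth x"
  by (auto simp: sawtooth_def field_simps)

lemma sawtooth_sum_minus: "sawtooth_sum N (- x) = - sawtooth_sum N x"
  by (simp add: sawtooth_sum_def sum_negf[symmetric])

lemma sawtooth_sum_2pi_minus: "sawtooth_sum N (2 * pi - x) = - sawtooth_sum N x"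
proof -
  have "sin (real j * (2 * pi - x)) = - sin (real j * x)" for j
  proof -
    have "real j * (2 * pi - x) = real (2 * j) * pi - real j * x"
      by (simp add: algebra_simps)
    then show ?thesis
      by (simp add: sin_diff)
  qed
  then show ?thesis
    by (simp add: sawtooth_sum_def sum_negf[symmetric])
qed

lemma sawtooth_sum_tendsto:
  assumes "x \<noteq> 0" "\<bar>x\<bar> < 2 * pi"
  shows "(\<lambda>N. sawtooth_sum N x) \<longlonglongrightarrow> sawtooth x"
proof -
  have upper_half: "(\<lambda>N. sawtooth_sum N y) \<longlonglongrightarrow> sawtooth y" if "0 < y" "y \<le> pi" for y
  proof -
    have "(\<lambda>N. sawtooth y - sawtooth_sum N y) \<longlonglongrightarrow> 0"
    proof (rule Lim_null_comparison)
      show "\<forall>\<^sub>F N in sequentially. norm (sawtooth y - sawtooth_sum N y) \<le> 2 / ((2 * real N + 1) * sin (y / 2))"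
        using sawtooth_remainder_crude[OF that] that by (simp add: sawtooth_def)
      have "sin (y / 2) > 0"
        using that by (intro sin_gt_zero) auto
      then show "(\<lambda>N. 2 / ((2 * real N + 1) * sin (y / 2))) \<longlonglongrightarrow> 0"
        by real_asymp
    qed
    from tendsto_diff[OF tendsto_const this, of "sawtooth y"] show ?thesis
      by simp
  qed
  have positive: "(\<lambda>N. sawtooth_sum N y) \<longlonglongrightarrow> sawtooth y" if "0 < y" "y < 2 * pi" for y
  proof (cases "y \<le> pi")
    case False
    then have "(\<lambda>N. - sawtooth_sum N (2 * pi - y)) \<longlonglongrightarrow> - sawtooth (2 * pi - y)"
      using that by (intro tendsto_minus upper_half) auto
    moreover have "- sawtooth (2 * pi - y) = sawtooth y"
      using that False by (simp add: sawtooth_def field_simps)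
    ultimately show ?thesis
      by (simp add: sawtooth_sum_2pi_minus)
  qed (use that upper_half in auto)
  show ?thesis
  proof (cases "x > 0")
    case False
    then have "(\<lambda>N. - sawtooth_sum N (- x)) \<longlonglongrightarrow> - sawtooth (- x)"
      using assms by (intro tendsto_minus positive) auto
    then show ?thesis
      by (simp add: sawtooth_sum_minus sawtooth_minus)
  qed (use assms positive in auto)
qed

lemma sawtooth_remainder_bound:
  assumes "x \<noteq> 0" "\<bar>x\<bar> < 2 * pi"
  shows "\<bar>sawtooth x - sawtooth_sum n x\<bar> \<le> 1 / ((real n + 1) * \<bar>sin (x / 2)\<bar>)"
proof (rule LIMSEQ_le_const2)
  show "(\<lambda>N. \<bar>sawtooth_sum N x - sawtooth_sum n x\<bar>) \<longlonglongrightarrow> \<bar>sawtooth x - sawtooth_sum n x\<bar>"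
    by (intro tendsto_intros sawtooth_sum_tendsto assms)
  show "\<exists>N0. \<forall>N\<ge>N0. \<bar>sawtooth_sum N x - sawtooth_sum n x\<bar> \<le> 1 / ((real n + 1) * \<bar>sin (x / 2)\<bar>)"
    using sawtooth_sum_cauchy[OF sin_half_nonzero[OF assms]] by blast
qed

section \<open>Damped sine sums\<close>

lemma summation_by_parts_damped:
  fixes d b :: "nat \<Rightarrow> real"
  assumes "d 0 = 1"
  shows "L - (\<Sum>j = 1..n. d j * b j) =
    (\<Sum>j<n. (d j - d (Suc j)) * (L - (\<Sum>i = 1..j. b i))) + d n * (L - (\<Sum>i = 1..n. b i))"
proof (induction n)
  case 0
  with assms show ?case by simp
next
  case (Suc n)
  then show ?case
    by (simp add: algebra_simps)
qed

definition damping_constant :: "(nat \<Rightarrow> real) \<Rightarrow> nat \<Rightarrow> real" where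
  "damping_constant d n = d n / (real n + 1) + (\<Sum>j<n. (d j - d (Suc j)) / (real j + 1))"

lemma damping_constant_pos:
  assumes "\<And>j. j < n \<Longrightarrow> d (Suc j) \<le> d j" "0 < d n"
  shows "0 < damping_constant d n"
proof -
  have "0 \<le> (\<Sum>j<n. (d j - d (Suc j)) / (real j + 1))"
    using assms(1) by (intro sum_nonneg) auto
  with assms(2) show ?thesis
    by (simp add: damping_constant_def add_pos_nonneg)
qed

lemma damped_sum_error_bound:
  fixes d b :: "nat \<Rightarrow> real"
  assumes "d 0 = 1" and d_antimono: "\<And>j. j < n \<Longrightarrow> d (Suc j) \<le> d j" and "0 \<le> d n"
    and partial_bound: "\<And>j. j \<le> n \<Longrightarrow> \<bar>L - (\<Sum>i = 1..j. b i)\<bar> \<le> c / (real j + 1)"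
  shows "\<bar>L - (\<Sum>j = 1..n. d j * b j)\<bar> \<le> c * damping_constant d n"
proof -
  have "\<bar>(d j - d (Suc j)) * (L - (\<Sum>i = 1..j. b i))\<bar> \<le> c * ((d j - d (Suc j)) / (real j + 1))"
    if "j < n" for j
    using mult_left_mono[OF partial_bound, of j "d j - d (Suc j)"] d_antimono[OF that] that
    by (simp add: abs_mult ac_simps)
  then have "\<bar>\<Sum>j<n. (d j - d (Suc j)) * (L - (\<Sum>i = 1..j. b i))\<bar> \<le> c * (\<Sum>j<n. (d j - d (Suc j)) / (real j + 1))"
    unfolding sum_distrib_left by (intro order_trans[OF sum_abs] sum_mono) auto
  moreover have "\<bar>d n * (L - (\<Sum>i = 1..n. b i))\<bar> \<le> c * (d n / (real n + 1))"
    using mult_left_mono[OF partial_bound \<open>0 \<le> d n\<close>, of n] \<open>0 \<le> d n\<close> by (simp add: abs_mult ac_simps)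
  ultimately show ?thesis
    unfolding summation_by_parts_damped[of d, OF \<open>d 0 = 1\<close>] damping_constant_def distrib_left
    by (smt (verit) abs_triangle_ineq)
qed

definition damped_sawtooth_sum :: "(nat \<Rightarrow> real) \<Rightarrow> nat \<Rightarrow> real \<Rightarrow> real" where
  "damped_sawtooth_sum d n x = (\<Sum>j = 1..n. d j * (sin (real j * x) / real j))"

(* The value 0 at 0 is deliberate: the sawtooth and all its damped sine sums vanish there. *)
definition abs_csc_half :: "real \<Rightarrow> real" where
  "abs_csc_half x = (if x = 0 then 0 else 1 / \<bar>sin (x / 2)\<bar>)"

lemma damped_sawtooth_error_bound:
  assumes "d 0 = 1" "\<And>j. j < n \<Longrightarrow> d (Suc j) \<le> d j" "0 \<le> d n" "\<bar>x\<bar> < 2 * pi"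
  shows "\<bar>sawtooth x - damped_sawtooth_sum d n x\<bar> \<le> damping_constant d n * abs_csc_half x"
proof (cases "x = 0")
  case True
  then show ?thesis
    by (simp add: sawtooth_def damped_sawtooth_sum_def abs_csc_half_def)
next
  case False
  have "\<bar>sawtooth x - damped_sawtooth_sum d n x\<bar> \<le> (1 / \<bar>sin (x / 2)\<bar>) * damping_constant d n"
    unfolding damped_sawtooth_sum_def
  proof (rule damped_sum_error_bound[OF assms(1-3)])
    show "\<bar>sawtooth x - (\<Sum>i = 1..j. sin (real i * x) / real i)\<bar> \<le> 1 / \<bar>sin (x / 2)\<bar> / (real j + 1)" for j
      using sawtooth_remainder_bound[OF False assms(4), of j] by (simp add: sawtooth_sum_def field_simps)
  qed
  with False show ?thesis
    by (simp add: abs_csc_half_def mult.commute)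
qed

section \<open>The damped cosine sum of the indicator\<close>

lemma arccos_ordered:
  assumes "-1 \<le> a" "a < b" "b \<le> 1"
  shows "0 \<le> arccos b" "arccos b < arccos a" "arccos a \<le> pi"
  using assms arccos_lbound[of b] arccos_ubound[of a] arccos_less_arccos[of a b] by auto

lemma damped_cos_sum_eq_sawtooth:
  assumes "d 0 = 1" and \<alpha>: "arccos a = \<alpha>" and \<beta>: "arccos b = \<beta>"
  shows "(\<Sum>j = 0..n. coef a b j * d j * cos (real j * \<theta>)) = (\<alpha> - \<beta>) / pi
    + (damped_sawtooth_sum d n (\<alpha> + \<theta>) + damped_sawtooth_sum d n (\<alpha> - \<theta>)
       - damped_sawtooth_sum d n (\<beta> + \<theta>) - damped_sawtooth_sum d n (\<beta> - \<theta>)) / pi"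
proof -
  have product_to_sum: "2 * sin (real j * x) * cos (real j * \<theta>) = sin (real j * (x + \<theta>)) + sin (real j * (x - \<theta>))"
    for j x
    by (simp add: distrib_left right_diff_distrib sin_add sin_diff)
  have "coef a b j * d j * cos (real j * \<theta>) =
      (d j * (sin (real j * (\<alpha> + \<theta>)) / real j) + d j * (sin (real j * (\<alpha> - \<theta>)) / real j)
       - d j * (sin (real j * (\<beta> + \<theta>)) / real j) - d j * (sin (real j * (\<beta> - \<theta>)) / real j)) / pi"
    if "j \<in> {1..n}" for j
  proof -
    have j: "real j \<noteq> 0"
      using that by simp
    then have "coef a b j * d j * cos (real j * \<theta>) =
        d j * (2 * sin (real j * \<alpha>) * cos (real j * \<theta>) - 2 * sin (real j * \<beta>) * cos (real j * \<theta>)) / (pi * real j)"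
      by (simp add: coef_def \<alpha> \<beta> Let_def field_simps)
    also have "\<dots> = d j * (sin (real j * (\<alpha> + \<theta>)) + sin (real j * (\<alpha> - \<theta>))
        - sin (real j * (\<beta> + \<theta>)) - sin (real j * (\<beta> - \<theta>))) / (pi * real j)"
      unfolding product_to_sum by (simp add: algebra_simps)
    also have "\<dots> = (d j * (sin (real j * (\<alpha> + \<theta>)) / real j) + d j * (sin (real j * (\<alpha> - \<theta>)) / real j)
        - d j * (sin (real j * (\<beta> + \<theta>)) / real j) - d j * (sin (real j * (\<beta> - \<theta>)) / real j)) / pi"
      using j by (simp add: field_simps)
    finally show ?thesis .
  qed
  then have "(\<Sum>j = 1..n. coef a b j * d j * cos (real j * \<theta>)) =
      (damped_sawtooth_sum d n (\<alpha> + \<theta>) + damped_sawtooth_sum d n (\<alpha> - \<theta>)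
       - damped_sawtooth_sum d n (\<beta> + \<theta>) - damped_sawtooth_sum d n (\<beta> - \<theta>)) / pi"
    unfolding damped_sawtooth_sum_def
    by (simp add: sum_divide_distrib[symmetric] sum.distrib sum_subtractf)
  moreover have "coef a b 0 * d 0 * cos (real 0 * \<theta>) = (\<alpha> - \<beta>) / pi"
    by (simp add: coef_def \<alpha> \<beta> \<open>d 0 = 1\<close>)
  ultimately show ?thesis
    by (simp add: sum.atLeast_Suc_atMost)
qed

(* The excluded corner is the one point where the formula fails: it gives 1 instead of 1/2. *)
lemma gfun_eq_sawtooth:
  assumes \<alpha>: "arccos a = \<alpha>" and \<beta>: "arccos b = \<beta>"
    and "0 \<le> \<beta>" "\<beta> < \<alpha>" "\<alpha> \<le> pi" "0 \<le> \<theta>" "\<theta> \<le> pi"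
    and "\<not> (\<theta> = \<beta> \<and> \<beta> = 0)"
  shows "gfun a b \<theta> = (\<alpha> - \<beta>) / pi
    + (sawtooth (\<alpha> + \<theta>) + sawtooth (\<alpha> - \<theta>) - sawtooth (\<beta> + \<theta>) - sawtooth (\<beta> - \<theta>)) / pi"
proof -
  have "pi * gfun a b \<theta> =
      (\<alpha> - \<beta>) + (sawtooth (\<alpha> + \<theta>) + sawtooth (\<alpha> - \<theta>) - sawtooth (\<beta> + \<theta>) - sawtooth (\<beta> - \<theta>))"
    using assms by (auto simp: gfun_def sawtooth_def Let_def field_simps)
  then show ?thesis
    by (simp add: eq_divide_eq add_divide_distrib[symmetric] mult.commute)
qed

lemma abs_csc_half_minus: "abs_csc_half (- x) = abs_csc_half x"
  by (simp add: abs_csc_half_def)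

lemma inv_abs_sin_half_eq:
  assumes "x \<noteq> 0" "\<bar>x\<bar> < 2 * pi"
  shows "inv_abs (sin (x / 2)) = ereal (abs_csc_half x)"
  using sin_half_nonzero[OF assms] assms by (simp add: inv_abs_def abs_csc_half_def)

lemma Jfun_nonneg: "0 \<le> Jfun a b \<theta>"
proof -
  have "0 \<le> inv_abs x" for x
    by (simp add: inv_abs_def)
  then show ?thesis
    by (simp add: Jfun_def Let_def add_nonneg_nonneg)
qed

lemma Jfun_degenerate:
  assumes "arccos b < arccos a"
    and "\<theta> = arccos a \<and> arccos a = pi \<or> \<theta> = arccos b \<and> arccos b = 0"
  shows "Jfun a b \<theta> = \<infinity>"
proof -
  have "inv_abs x \<noteq> - \<infinity>" for x
    by (simp add: inv_abs_def)
  with assms show ?thesis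
    by (auto simp: Jfun_def Let_def inv_abs_def)
qed

lemma Jfun_eq_abs_csc_half:
  assumes \<alpha>: "arccos a = \<alpha>" and \<beta>: "arccos b = \<beta>"
    and "0 \<le> \<beta>" "\<beta> < \<alpha>" "\<alpha> \<le> pi" "0 \<le> \<theta>" "\<theta> \<le> pi"
    and "\<not> (\<theta> = \<beta> \<and> \<beta> = 0)" "\<not> (\<theta> = \<alpha> \<and> \<alpha> = pi)"
  shows "Jfun a b \<theta> = ereal (abs_csc_half (\<alpha> + \<theta>) + abs_csc_half (\<alpha> - \<theta>)
    + abs_csc_half (\<beta> + \<theta>) + abs_csc_half (\<beta> - \<theta>))"
proof -
  have half_diff_swap: "(x - y) / 2 = - ((y - x) / 2)" for x y :: real
    by (simp only: minus_divide_left minus_diff_eq)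
  consider "\<theta> = \<alpha>" | "\<theta> = \<beta>" | "\<theta> \<noteq> \<alpha>" "\<theta> \<noteq> \<beta>"
    by blast
  then show ?thesis
  proof cases
    case 1
    then have "Jfun a b \<theta> = inv_abs (sin \<alpha>) + inv_abs (sin ((\<alpha> + \<beta>) / 2))
        + inv_abs (sin ((\<alpha> - \<beta>) / 2))"
      by (simp add: Jfun_def \<alpha> \<beta>)
    with 1 assms show ?thesis
      by (simp add: inv_abs_sin_half_eq inv_abs_sin_half_eq[of "2 * \<alpha>", simplified] add.commute
          abs_csc_half_minus[of "\<alpha> - \<beta>", symmetric] abs_csc_half_def[of 0])
  next
    case 2
    with assms have "Jfun a b \<theta> = inv_abs (sin \<beta>) + inv_abs (sin ((\<alpha> + \<beta>) / 2))
        + inv_abs (sin ((\<alpha> - \<beta>) / 2))"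
      by (simp add: Jfun_def \<alpha> \<beta>)
    with 2 assms show ?thesis
      by (simp add: inv_abs_sin_half_eq inv_abs_sin_half_eq[of "2 * \<beta>", simplified] add.commute
          abs_csc_half_def[of 0])
  next
    case 3
    then have "Jfun a b \<theta> = inv_abs (sin ((\<alpha> + \<theta>) / 2)) + inv_abs (sin ((\<alpha> - \<theta>) / 2))
        + inv_abs (sin ((\<beta> + \<theta>) / 2)) + inv_abs (sin ((\<beta> - \<theta>) / 2))"
      by (simp add: Jfun_def \<alpha> \<beta> add.commute half_diff_swap[of \<theta>] inv_abs_def)
    with 3 assms show ?thesis
      by (simp add: inv_abs_sin_half_eq)
  qed
qed

lemma damped_indicator_error_le_Jfun:
  assumes "-1 \<le> a" "a < b" "b \<le> 1" "0 \<le> \<theta>" "\<theta> \<le> pi"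
    and "d 0 = 1" "\<And>j. j < n \<Longrightarrow> d (Suc j) \<le> d j" "0 < d n"
  shows "ereal \<bar>gfun a b \<theta> - (\<Sum>j = 0..n. coef a b j * d j * cos (real j * \<theta>))\<bar>
    \<le> ereal (damping_constant d n / pi) * Jfun a b \<theta>"
proof -
  define \<alpha> where "\<alpha> = arccos a"
  define \<beta> where "\<beta> = arccos b"
  define W where "W = damping_constant d n"
  define E where "E x = sawtooth x - damped_sawtooth_sum d n x" for x
  have order: "0 \<le> \<beta>" "\<beta> < \<alpha>" "\<alpha> \<le> pi"
    using arccos_ordered[OF assms(1-3)] by (simp_all add: \<alpha>_def \<beta>_def)
  have W: "0 < W"
    unfolding W_def using assms(7,8) by (rule damping_constant_pos)
  show ?thesis
  proof (cases "\<theta> = \<alpha> \<and> \<alpha> = pi \<or> \<theta> = \<beta> \<and> \<beta> = 0")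
    case True
    then have "Jfun a b \<theta> = \<infinity>"
      using order by (intro Jfun_degenerate) (auto simp: \<alpha>_def \<beta>_def)
    with W show ?thesis
      by (simp add: W_def)
  next
    case False
    have E_bound: "\<bar>E x\<bar> \<le> W * abs_csc_half x" if "\<bar>x\<bar> < 2 * pi" for x
      unfolding E_def W_def using assms(6-8) that by (intro damped_sawtooth_error_bound) auto
    have ranges: "\<bar>\<alpha> + \<theta>\<bar> < 2 * pi" "\<bar>\<alpha> - \<theta>\<bar> < 2 * pi" "\<bar>\<beta> + \<theta>\<bar> < 2 * pi" "\<bar>\<beta> - \<theta>\<bar> < 2 * pi"
      using order assms(4,5) False by (auto simp: abs_less_iff)
    have "gfun a b \<theta> - (\<Sum>j = 0..n. coef a b j * d j * cos (real j * \<theta>)) =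
        (E (\<alpha> + \<theta>) + E (\<alpha> - \<theta>) - E (\<beta> + \<theta>) - E (\<beta> - \<theta>)) / pi"
      using gfun_eq_sawtooth[OF \<alpha>_def[symmetric] \<beta>_def[symmetric] order assms(4,5)] False
        damped_cos_sum_eq_sawtooth[of d, OF assms(6) \<alpha>_def[symmetric] \<beta>_def[symmetric]]
      by (simp add: E_def diff_divide_distrib add_divide_distrib)
    also have "\<bar>\<dots>\<bar> \<le> (\<bar>E (\<alpha> + \<theta>)\<bar> + \<bar>E (\<alpha> - \<theta>)\<bar> + \<bar>E (\<beta> + \<theta>)\<bar> + \<bar>E (\<beta> - \<theta>)\<bar>) / pi"
      by (simp add: abs_divide divide_right_mono)
    also have "\<dots> \<le> W * (abs_csc_half (\<alpha> + \<theta>) + abs_csc_half (\<alpha> - \<theta>)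
        + abs_csc_half (\<beta> + \<theta>) + abs_csc_half (\<beta> - \<theta>)) / pi"
      using E_bound[OF ranges(1)] E_bound[OF ranges(2)] E_bound[OF ranges(3)] E_bound[OF ranges(4)]
      by (intro divide_right_mono) (simp_all add: distrib_left)
    finally show ?thesis
      using Jfun_eq_abs_csc_half[OF \<alpha>_def[symmetric] \<beta>_def[symmetric] order assms(4,5)] False
      by (simp add: W_def)
  qed
qed

section \<open>Lanczos factors\<close>

lemma lanczos_eq_sinc_powr: "lanczos m j k = sinc (real j * pi / (real k + 1)) powr m"
  by (simp add: lanczos_def Let_def)

lemma sin_minus_mult_cos_nonneg:
  assumes "0 \<le> u" "u \<le> pi"
  shows "0 \<le> sin u - u * cos u"
proof -
  have "(\<lambda>t. sin t - t * cos t) 0 \<le> (\<lambda>t. sin t - t * cos t) u"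
  proof (rule DERIV_nonneg_imp_nondecreasing[OF assms(1)])
    fix t assume "0 \<le> t" "t \<le> u"
    then show "\<exists>y. ((\<lambda>t. sin t - t * cos t) has_real_derivative y) (at t) \<and> 0 \<le> y"
      using assms sin_ge_zero[of t]
      by (intro exI[of _ "t * sin t"] conjI) (auto intro!: derivative_eq_intros)
  qed
  then show ?thesis
    by simp
qed

lemma sin_minus_mult_cos_le_cube:
  fixes u :: real
  assumes "0 \<le> u"
  shows "sin u - u * cos u \<le> u ^ 3 / 3"
proof -
  have "(\<lambda>t. t ^ 3 / 3 - sin t + t * cos t) 0 \<le> (\<lambda>t. t ^ 3 / 3 - sin t + t * cos t) u"
  proof (rule DERIV_nonneg_imp_nondecreasing[OF assms])
    fix t assume "0 \<le> t" "t \<le> u"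
    then show "\<exists>y. ((\<lambda>t. t ^ 3 / 3 - sin t + t * cos t) has_real_derivative y) (at t) \<and> 0 \<le> y"
      using sin_x_le_x[of t]
      by (intro exI[of _ "t * (t - sin t)"] conjI)
        (auto intro!: derivative_eq_intros mult_left_mono simp: algebra_simps power2_eq_square)
  qed
  then show ?thesis
    by simp
qed

lemma sinc_nonneg: "0 \<le> u \<Longrightarrow> u \<le> pi \<Longrightarrow> 0 \<le> sinc u"
  by (simp add: sin_ge_zero)

lemma sinc_antimono:
  assumes "0 \<le> u" "u \<le> v" "v \<le> pi"
  shows "sinc v \<le> sinc u"
proof (cases "u = 0")
  case True
  then show ?thesis
    using sin_x_le_x[of v] assms by (auto simp: divide_le_eq)
next
  case False
  have "(\<lambda>t. - (sin t / t)) u \<le> (\<lambda>t. - (sin t / t)) v"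
  proof (rule DERIV_nonneg_imp_nondecreasing[OF assms(2)])
    fix t assume t: "u \<le> t" "t \<le> v"
    then have "t \<noteq> 0"
      using False assms by auto
    then show "\<exists>y. ((\<lambda>t. - (sin t / t)) has_real_derivative y) (at t) \<and> 0 \<le> y"
      using sin_minus_mult_cos_nonneg[of t] t assms
      by (intro exI[of _ "(sin t - t * cos t) / t\<^sup>2"] conjI)
        (auto intro!: derivative_eq_intros simp: field_simps power2_eq_square)
  qed
  with False assms show ?thesis
    by simp
qed

lemma lanczos_Suc_le:
  assumes "0 \<le> m" "Suc j \<le> k"
  shows "lanczos m (Suc j) k \<le> lanczos m j k"
proof -
  have "real (Suc j) * pi / (real k + 1) \<le> pi"
    using assms(2) by (simp add: field_simps)
  then show ?thesis
    unfolding lanczos_eq_sinc_powr using assms(1)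
    by (intro powr_mono2 sinc_nonneg sinc_antimono) (auto simp: divide_right_mono)
qed

lemma lanczos_pos:
  assumes "j \<le> k"
  shows "0 < lanczos m j k"
proof -
  have "real j * pi < (real k + 1) * pi"
    using assms by (intro mult_strict_right_mono) auto
  then have "0 < sin (real j * pi / (real k + 1))" if "0 < j"
    using that by (intro sin_gt_zero) (auto simp: field_simps)
  then show ?thesis
    by (cases "j = 0") (auto simp: lanczos_eq_sinc_powr)
qed

definition Cm_integrand :: "real \<Rightarrow> real \<Rightarrow> real" where
  "Cm_integrand m u = (sin u) powr (m - 1) * (sin u - u * cos u) / u powr (m + 2)"

lemma Cm_eq_integral: "Cm m = integral {0..pi} (Cm_integrand m)"
  unfolding Cm_def Cm_integrand_def[abs_def] ..

lemma Cm_integrand_nonneg: "0 \<le> u \<Longrightarrow> u \<le> pi \<Longrightarrow> 0 \<le> Cm_integrand m u"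
  using sin_minus_mult_cos_nonneg[of u] by (simp add: Cm_integrand_def)

lemma Cm_integrand_eq:
  assumes "0 < u" "u < pi"
  shows "Cm_integrand m u = (sin u / u) powr (m - 1) * ((sin u - u * cos u) / u ^ 3)"
proof -
  have "u powr (m + 2) = u powr ((m - 1) + 3)"
    by (intro arg_cong[of _ _ "(powr) u"]) simp
  also have "\<dots> = u powr (m - 1) * u powr 3"
    by (rule powr_add)
  also have "u powr 3 = u ^ 3"
    using assms(1) by simp
  finally have "u powr (m + 2) = u powr (m - 1) * u ^ 3" .
  moreover have "0 < sin u"
    using assms by (intro sin_gt_zero)
  ultimately show ?thesis
    using assms unfolding Cm_integrand_def powr_divide by (simp add: field_simps)
qed

lemma Cm_integrand_bounded:
  assumes "0 \<le> u" "u \<le> pi / 2"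
  shows "Cm_integrand m u \<le> max 1 ((2 / pi) powr (m - 1)) / 3"
proof (cases "u = 0")
  case True
  then show ?thesis
    by (simp add: Cm_integrand_def)
next
  case False
  with assms have u: "0 < u" "u < pi"
    by auto
  have lower: "2 / pi \<le> sin u / u" and upper: "sin u / u \<le> 1"
    using sinc_antimono[of u "pi / 2"] sin_x_le_x[of u] u assms by auto
  have power_bound: "(sin u / u) powr (m - 1) \<le> max 1 ((2 / pi) powr (m - 1))"
  proof (cases "0 \<le> m - 1")
    case True
    have "0 < sin u"
      using u by (intro sin_gt_zero)
    with True upper u have "(sin u / u) powr (m - 1) \<le> 1 powr (m - 1)"
      by (intro powr_mono2) auto
    then show ?thesis
      by simp
  next
    case False
    with lower have "(sin u / u) powr (m - 1) \<le> (2 / pi) powr (m - 1)"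
      by (intro powr_mono2') auto
    then show ?thesis
      by simp
  qed
  have "0 \<le> (sin u - u * cos u) / u ^ 3" "(sin u - u * cos u) / u ^ 3 \<le> 1 / 3"
    using sin_minus_mult_cos_nonneg[of u] sin_minus_mult_cos_le_cube[of u] u
    by (simp_all add: divide_le_eq)
  then have "Cm_integrand m u \<le> max 1 ((2 / pi) powr (m - 1)) * (1 / 3)"
    unfolding Cm_integrand_eq[OF u] by (intro mult_mono power_bound) auto
  then show ?thesis
    by simp
qed

lemma sinc_powr_has_derivative:
  assumes "0 < u" "u < pi"
  shows "((\<lambda>u. sinc u powr m) has_real_derivative - (m * u * Cm_integrand m u)) (at u)"
proof -
  have "0 < sin u"
    using assms by (intro sin_gt_zero)
  then have "((\<lambda>t. (sin t / t) powr m) has_real_derivative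
      m * (sin u / u) powr (m - 1) * ((u * cos u - sin u) / u\<^sup>2)) (at u)"
    using assms by (auto intro!: derivative_eq_intros simp: power2_eq_square algebra_simps)
  then have "((\<lambda>u. sinc u powr m) has_real_derivative
      m * (sin u / u) powr (m - 1) * ((u * cos u - sin u) / u\<^sup>2)) (at u)"
    by (rule has_field_derivative_transform_within_open[where S = "{0<..}"]) (use assms in auto)
  moreover have "m * (sin u / u) powr (m - 1) * ((u * cos u - sin u) / u\<^sup>2) = - (m * u * Cm_integrand m u)"
    using assms by (simp add: Cm_integrand_eq field_simps power2_eq_square power3_eq_cube)
  ultimately show ?thesis
    by simp
qed

lemma sinc_powr_diff_has_integral:
  assumes "0 < m" "0 \<le> a" "a \<le> b" "b \<le> pi"
  shows "((\<lambda>u. m * u * Cm_integrand m u) has_integral sinc a powr m - sinc b powr m) {a..b}"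
proof -
  have "continuous_on {a..b} (\<lambda>u. sinc u powr m)"
    using assms sinc_nonneg
    by (intro continuous_on_powr' continuous_on_sinc continuous_on_id continuous_on_const) auto
  then have "((\<lambda>u. - (m * u * Cm_integrand m u)) has_integral sinc b powr m - sinc a powr m) {a..b}"
    using assms
    by (intro fundamental_theorem_of_calculus_interior)
      (auto intro!: sinc_powr_has_derivative simp: has_real_derivative_iff_has_vector_derivative[symmetric])
  from has_integral_neg[OF this] show ?thesis
    by simp
qed

lemma Cm_integrand_integrable:
  assumes "0 < m"
  shows "Cm_integrand m integrable_on {0..pi}"
proof -
  have measurable: "Cm_integrand m \<in> borel_measurable (lebesgue_on S)" for S
  proof -
    have "Cm_integrand m \<in> borel_measurable borel"
      unfolding Cm_integrand_def[abs_def] by measurable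
    then show ?thesis
      by (intro measurable_restrict_space1 measurable_completion) simp
  qed
  have "Cm_integrand m integrable_on {0..pi / 2}"
  proof (rule measurable_bounded_by_integrable_imp_integrable_real[OF measurable])
    show "(\<lambda>u. max 1 ((2 / pi) powr (m - 1)) / 3) integrable_on {0..pi / 2}"
      by (rule integrable_const_ivl)
    show "\<bar>Cm_integrand m u\<bar> \<le> max 1 ((2 / pi) powr (m - 1)) / 3" if "u \<in> {0..pi / 2}" for u
      using that Cm_integrand_bounded[of u m] Cm_integrand_nonneg[of u m] by auto
  qed simp
  moreover have "Cm_integrand m integrable_on {pi / 2..pi}"
  \<comment> \<open>for \<open>m < 1\<close> the integrand is unbounded near \<open>pi\<close>; there it is dominated by the
      derivative \<open>m u Cm_integrand m u\<close> of \<open>- sinc u powr m\<close>\<close>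
  proof (rule measurable_bounded_by_integrable_imp_integrable_real[OF measurable])
    have "(\<lambda>u. m * u * Cm_integrand m u) integrable_on {pi / 2..pi}"
      using sinc_powr_diff_has_integral[OF assms, of "pi / 2" pi] by (auto intro: has_integral_integrable)
    from integrable_on_cmult_left[OF this, of "2 / (m * pi)"]
    show "(\<lambda>u. 2 / (m * pi) * (m * u * Cm_integrand m u)) integrable_on {pi / 2..pi}"
      by simp
    show "\<bar>Cm_integrand m u\<bar> \<le> 2 / (m * pi) * (m * u * Cm_integrand m u)" if "u \<in> {pi / 2..pi}" for u
    proof -
      have nonneg: "0 \<le> Cm_integrand m u"
        using that by (intro Cm_integrand_nonneg) auto
      have "1 \<le> 2 / (m * pi) * (m * u)"
        using that assms by (auto simp: field_simps)
      from mult_right_mono[OF this nonneg] show ?thesis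
        by (simp only: mult_1 mult.assoc abs_of_nonneg[OF nonneg])
    qed
  qed simp
  ultimately show ?thesis
    by (intro Henstock_Kurzweil_Integration.integrable_combine[of 0 "pi / 2" pi]) auto
qed

lemma Cm_nonneg: "0 < m \<Longrightarrow> 0 \<le> Cm m"
  unfolding Cm_eq_integral using Cm_integrand_integrable Cm_integrand_nonneg by (intro integral_nonneg) auto

lemma sum_integral_uniform_partition:
  fixes f :: "real \<Rightarrow> real"
  assumes "f integrable_on {0..b}" "0 \<le> h" "real n * h \<le> b"
  shows "(\<Sum>j<n. integral {real j * h..real (Suc j) * h} f) = integral {0..real n * h} f"
  using assms(3)
proof (induction n)
  case 0
  then show ?case by simp
next
  case (Suc n)
  have "real n * h \<le> real (Suc n) * h"
    using assms(2) by (simp add: mult_right_mono)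
  moreover have "f integrable_on {0..real (Suc n) * h}"
    using Suc.prems by (intro integrable_on_subinterval[OF assms(1)]) auto
  ultimately have "integral {0..real n * h} f + integral {real n * h..real (Suc n) * h} f
      = integral {0..real (Suc n) * h} f"
    using assms(2) by (intro Henstock_Kurzweil_Integration.integral_combine) auto
  with Suc \<open>real n * h \<le> real (Suc n) * h\<close> show ?case
    by simp
qed

lemma lanczos_diff_le_integral:
  assumes "0 < m" "Suc j \<le> k"
  shows "(lanczos m j k - lanczos m (Suc j) k) / (real j + 1) \<le> pi / (real k + 1) * m *
    integral {real j * (pi / (real k + 1))..real (Suc j) * (pi / (real k + 1))} (Cm_integrand m)"
proof -
  define u where "u i = real i * (pi / (real k + 1))" for i
  have lanczos_u: "lanczos m i k = sinc (u i) powr m" for i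
    by (simp add: u_def lanczos_eq_sinc_powr)
  have "real (Suc j) * pi \<le> (real k + 1) * pi"
    using assms(2) by (intro mult_right_mono) auto
  then have u: "0 \<le> u j" "u j \<le> u (Suc j)" "u (Suc j) \<le> pi"
    by (simp_all add: u_def field_simps)
  have "Cm_integrand m integrable_on {u j..u (Suc j)}"
    using u by (intro integrable_on_subinterval[OF Cm_integrand_integrable[OF assms(1)]]) auto
  then have upper: "((\<lambda>t. (m * u (Suc j)) * Cm_integrand m t) has_integral
      (m * u (Suc j)) * integral {u j..u (Suc j)} (Cm_integrand m)) {u j..u (Suc j)}"
    by (intro has_integral_mult_right integrable_integral)
  have lower: "((\<lambda>t. m * t * Cm_integrand m t) has_integral lanczos m j k - lanczos m (Suc j) k) {u j..u (Suc j)}"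
    unfolding lanczos_u using assms(1) u by (rule sinc_powr_diff_has_integral)
  have "lanczos m j k - lanczos m (Suc j) k \<le> (m * u (Suc j)) * integral {u j..u (Suc j)} (Cm_integrand m)"
  proof (rule has_integral_le[OF lower upper])
    fix t assume "t \<in> {u j..u (Suc j)}"
    then show "m * t * Cm_integrand m t \<le> m * u (Suc j) * Cm_integrand m t"
      using assms(1) u by (intro mult_right_mono Cm_integrand_nonneg) auto
  qed
  then show ?thesis
    by (simp add: u_def divide_right_mono field_simps)
qed

lemma damping_constant_lanczos_le:
  assumes "0 < m" "n \<le> k"
  shows "damping_constant (\<lambda>j. lanczos m j k) n \<le> lanczos m n k / (real n + 1) + pi * m * Cm m / (real k + 1)"
proof -
  let ?h = "pi / (real k + 1)"
  have "real n * pi \<le> (real k + 1) * pi"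
    using assms(2) by (intro mult_right_mono) auto
  then have h: "0 \<le> ?h" "real n * ?h \<le> pi"
    by (simp_all add: field_simps)
  have integrable: "Cm_integrand m integrable_on {0..pi}"
    using assms(1) by (rule Cm_integrand_integrable)
  have "(\<Sum>j<n. (lanczos m j k - lanczos m (Suc j) k) / (real j + 1))
      \<le> (\<Sum>j<n. ?h * m * integral {real j * ?h..real (Suc j) * ?h} (Cm_integrand m))"
    by (intro sum_mono lanczos_diff_le_integral assms(1)) (use assms(2) in auto)
  also have "\<dots> = ?h * m * integral {0..real n * ?h} (Cm_integrand m)"
    unfolding sum_distrib_left[symmetric] using h by (simp only: sum_integral_uniform_partition[OF integrable])
  also have "\<dots> \<le> ?h * m * Cm m"
    unfolding Cm_eq_integral using h assms(1)
    by (intro mult_left_mono integral_subset_le integrable_on_subinterval[OF integrable])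
      (auto intro: Cm_integrand_nonneg)
  finally show ?thesis
    by (simp add: damping_constant_def)
qed

theorem theorem3p3:
  fixes a b m \<theta> :: real and k k' :: nat
  assumes "-1 \<le> a" and "a < b" and "b \<le> 1"
    and "m > 0" and "1 \<le> k" and "1 \<le> k'" and "k' \<le> k"
    and "0 \<le> \<theta>" and "\<theta> \<le> pi"
  shows "ereal \<bar>gfun a b \<theta> - gmk a b m k' k \<theta>\<bar>
     \<le> ereal (lanczos m k' k / (pi * (real k' + 1))) * Jfun a b \<theta>
       + ereal (m * Cm m / (real k + 1)) * Jfun a b \<theta>
       + ereal (m * pi * (pi - \<theta>) / (3 * (real k + 1)^2))"
proof -
  let ?d = "\<lambda>j. lanczos m j k"
  let ?A = "lanczos m k' k / (pi * (real k' + 1))"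
  let ?B = "m * Cm m / (real k + 1)"
  have "damping_constant ?d k' / pi \<le> (lanczos m k' k / (real k' + 1) + pi * m * Cm m / (real k + 1)) / pi"
    using damping_constant_lanczos_le[OF \<open>m > 0\<close> \<open>k' \<le> k\<close>] by (rule divide_right_mono) simp
  also have "\<dots> = ?A + ?B"
    by (simp add: add_divide_distrib mult.commute)
  finally have damping_bound: "damping_constant ?d k' / pi \<le> ?A + ?B" .
  have "ereal \<bar>gfun a b \<theta> - gmk a b m k' k \<theta>\<bar> \<le> ereal (damping_constant ?d k' / pi) * Jfun a b \<theta>"
    unfolding gmk_def using assms
    by (intro damped_indicator_error_le_Jfun lanczos_Suc_le lanczos_pos) (auto simp: lanczos_def)
  also have "\<dots> \<le> ereal (?A + ?B) * Jfun a b \<theta>"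
    using damping_bound by (intro ereal_mult_right_mono Jfun_nonneg) simp
  also have "\<dots> = ereal ?A * Jfun a b \<theta> + ereal ?B * Jfun a b \<theta>"
    using lanczos_pos[OF \<open>k' \<le> k\<close>, of m] Cm_nonneg[OF \<open>m > 0\<close>] \<open>m > 0\<close>
    by (simp add: ereal_left_distrib[symmetric])
  \<comment> \<open>the bound holds without its last term\<close>
  also have "\<dots> \<le> \<dots> + ereal (m * pi * (pi - \<theta>) / (3 * (real k + 1)^2))"
    by (rule add_increasing2[OF _ order_refl]) (use assms in simp)
  finally show ?thesis .
qed

end
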